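(* Let $(H,B_1,B_2)$ be a Rota-Baxter system of Hopf algebras and $A$ a unital commutative algebra. For every $(f_1,f_2)\in G_{\mathcal{B}_1,\mathcal{B}_2}$ we have $f_1\ast f_2^{\ast-1}\in\operatorname{Im}(\Psi)$.
   Context: $\mathbb{F}$ is a field of characteristic $0$; Sweedler notation $\Delta(a)=a_1\otimes a_2$. A Rota-Baxter system of Hopf algebras is a triple $(H,B_1,B_2)$ with $(H,\cdot,1,\Delta,\epsilon,S)$ a cocommutative Hopf algebra, $B_1,B_2$ coalgebra homomorphisms with $B_1(1)=B_2(1)=1$, and for all $a,b\in H$: $B_1(a)B_1(b)=B_1(B_1(a_1)bS(B_2(a_2)))$, $B_2(a)B_2(b)=B_2(B_1(a_1)bS(B_2(a_2)))$. Descendent operation $a\circ b=B_1(a_1)bS(B_2(a_2))$, cocycle $\sigma(a)=B_1(a_1)S(B_2(a_2))$, $H_1=\operatorname{Im}(\sigma)$; $H_{B_1,B_2}$ is the Hopf algebra $H_1$ with product $\circ$, unit $1$, restricted $\Delta,\epsilon$, antipode $T(a)=S(B_1(a_1))B_2(a_2)$. Convolution: $(f\ast g)(a)=f(a_1)g(a_2)$; $f^{\ast-1}$ is the convolution inverse. $\mathrm{Char}(H,A)$ is the group under $\ast$ of algebra homomorphisms $H\to A$; $\mathrm{Char}(H_{B_1,B_2},A)$ is the group under convolution (w.r.t. the coproduct of $H_1$) of algebra homomorphisms $(H_1,\circ,1)\to A$. Define $\mathcal{B}_i:\mathrm{Char}(H,A)\to\mathrm{Char}(H_{B_1,B_2},A)$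 by $\mathcal{B}_i(f)(a)=f(B_i(a))$ ($a\in H_1$, $i=1,2$) and $\Psi:\mathrm{Char}(H,A)\to\mathrm{Char}(H_{B_1,B_2},A)$ by $\Psi(f)=f|_{H_1}$. The Cayley transform $\Theta:\operatorname{Im}(\mathcal{B}_1)/\mathcal{B}_1(\ker\mathcal{B}_2)\to\operatorname{Im}(\mathcal{B}_2)/\mathcal{B}_2(\ker\mathcal{B}_1)$ is $\Theta(\overline{\mathcal{B}_1(f)})=\overline{\mathcal{B}_2(f)}$. $G_{\mathcal{B}_1,\mathcal{B}_2}=\{(f_1,f_2)\in\operatorname{Im}(\mathcal{B}_1)\times\operatorname{Im}(\mathcal{B}_2)\mid\Theta(\overline{f_1})=\overline{f_2}\}$. *)

theory Defs
  imports Complex_Main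
begin

text \<open>
  The Hopf algebra H is a type 'h of class ring_1 (its ring structure is the
  algebra multiplication and unit) made into an F-vector space by a scalar
  multiplication sc.

  An element of H (x) H is represented by a finite list of pairs
  (a finite sum of simple tensors); two such lists represent the same tensor
  iff every F-bilinear form H x H -> F takes the same value on them (bilinear
  forms separate points of H (x) H over a field).  Similarly for H (x) H (x) H
  with trilinear forms.  The coproduct is a function Delta giving, for each a,
  a representation of Delta(a); Sweedler sums a_1 (x) a_2 |-> beta(a_1,a_2) for
  bilinear beta are written tsum (Delta a) beta.
\<close>

definition tsum :: "('h \<times> 'h) list \<Rightarrow> ('h \<Rightarrow> 'h \<Rightarrow> 'b::comm_monoid_add) \<Rightarrow> 'b" where
  "tsum l \<beta> = sum_list (map (\<lambda>(u, v). \<beta> u v) l)"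

definition bilin_form :: "('f::field \<Rightarrow> 'h::ab_group_add \<Rightarrow> 'h) \<Rightarrow> ('h \<Rightarrow> 'h \<Rightarrow> 'f) \<Rightarrow> bool" where
  "bilin_form sc \<beta> \<longleftrightarrow>
     (\<forall>y. Vector_Spaces.linear sc ((*)) (\<lambda>x. \<beta> x y)) \<and> (\<forall>x. Vector_Spaces.linear sc ((*)) (\<beta> x))"

definition trilin_form :: "('f::field \<Rightarrow> 'h::ab_group_add \<Rightarrow> 'h) \<Rightarrow> ('h \<Rightarrow> 'h \<Rightarrow> 'h \<Rightarrow> 'f) \<Rightarrow> bool" where
  "trilin_form sc \<gamma> \<longleftrightarrow>
     (\<forall>y z. Vector_Spaces.linear sc ((*)) (\<lambda>x. \<gamma> x y z)) \<and>
     (\<forall>x z. Vector_Spaces.linear sc ((*)) (\<lambda>y. \<gamma> x y z)) \<and>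
     (\<forall>x y. Vector_Spaces.linear sc ((*)) (\<gamma> x y))"

definition teq2 :: "('f::field \<Rightarrow> 'h::ab_group_add \<Rightarrow> 'h) \<Rightarrow> ('h \<times> 'h) list \<Rightarrow> ('h \<times> 'h) list \<Rightarrow> bool" where
  "teq2 sc l1 l2 \<longleftrightarrow> (\<forall>\<beta>. bilin_form sc \<beta> \<longrightarrow> tsum l1 \<beta> = tsum l2 \<beta>)"

definition teq3 :: "('f::field \<Rightarrow> 'h::ab_group_add \<Rightarrow> 'h) \<Rightarrow> ('h \<times> 'h \<times> 'h) list \<Rightarrow> ('h \<times> 'h \<times> 'h) list \<Rightarrow> bool" where
  "teq3 sc l1 l2 \<longleftrightarrow> (\<forall>\<gamma>. trilin_form sc \<gamma> \<longrightarrow>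
      sum_list (map (\<lambda>(x, y, z). \<gamma> x y z) l1) = sum_list (map (\<lambda>(x, y, z). \<gamma> x y z) l2))"

definition coprod_left :: "('h \<Rightarrow> ('h \<times> 'h) list) \<Rightarrow> 'h \<Rightarrow> ('h \<times> 'h \<times> 'h) list" where
  "coprod_left \<Delta> x = concat (map (\<lambda>(u, v). map (\<lambda>(u1, u2). (u1, u2, v)) (\<Delta> u)) (\<Delta> x))"

definition coprod_right :: "('h \<Rightarrow> ('h \<times> 'h) list) \<Rightarrow> 'h \<Rightarrow> ('h \<times> 'h \<times> 'h) list" where
  "coprod_right \<Delta> x = concat (map (\<lambda>(u, v). map (\<lambda>(v1, v2). (u, v1, v2)) (\<Delta> v)) (\<Delta> x))"

definition hopf_algebra ::
  "('f::field \<Rightarrow> 'h::ring_1 \<Rightarrow> 'h) \<Rightarrow> ('h \<Rightarrow> ('h \<times> 'h) list) \<Rightarrow> ('h \<Rightarrow> 'f) \<Rightarrow> ('h \<Rightarrow> 'h) \<Rightarrow> bool" where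
  "hopf_algebra sc \<Delta> \<epsilon> S \<longleftrightarrow>
     Vector_Spaces.vector_space sc \<and>
     (\<forall>c x y. sc c (x * y) = sc c x * y \<and> sc c (x * y) = x * sc c y) \<and>
     (\<forall>x y. teq2 sc (\<Delta> (x + y)) (\<Delta> x @ \<Delta> y)) \<and>
     (\<forall>c x. teq2 sc (\<Delta> (sc c x)) (map (\<lambda>(u, v). (sc c u, v)) (\<Delta> x))) \<and>
     (\<forall>x. teq3 sc (coprod_left \<Delta> x) (coprod_right \<Delta> x)) \<and>
     Vector_Spaces.linear sc ((*)) \<epsilon> \<and>
     (\<forall>x. tsum (\<Delta> x) (\<lambda>u v. sc (\<epsilon> u) v) = x) \<and>
     (\<forall>x. tsum (\<Delta> x) (\<lambda>u v. sc (\<epsilon> v) u) = x) \<and>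
     (\<forall>x y. teq2 sc (\<Delta> (x * y)) [(u * u', v * v'). (u, v) \<leftarrow> \<Delta> x, (u', v') \<leftarrow> \<Delta> y]) \<and>
     teq2 sc (\<Delta> 1) [(1, 1)] \<and>
     (\<forall>x y. \<epsilon> (x * y) = \<epsilon> x * \<epsilon> y) \<and> \<epsilon> 1 = 1 \<and>
     Vector_Spaces.linear sc sc S \<and>
     (\<forall>x. tsum (\<Delta> x) (\<lambda>u v. S u * v) = sc (\<epsilon> x) 1) \<and>
     (\<forall>x. tsum (\<Delta> x) (\<lambda>u v. u * S v) = sc (\<epsilon> x) 1)"

definition cocommutative :: "('f::field \<Rightarrow> 'h::ab_group_add \<Rightarrow> 'h) \<Rightarrow> ('h \<Rightarrow> ('h \<times> 'h) list) \<Rightarrow> bool" where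
  "cocommutative sc \<Delta> \<longleftrightarrow> (\<forall>x. teq2 sc (\<Delta> x) (map (\<lambda>(u, v). (v, u)) (\<Delta> x)))"

definition coalg_hom ::
  "('f::field \<Rightarrow> 'h::ab_group_add \<Rightarrow> 'h) \<Rightarrow> ('h \<Rightarrow> ('h \<times> 'h) list) \<Rightarrow> ('h \<Rightarrow> 'f) \<Rightarrow> ('h \<Rightarrow> 'h) \<Rightarrow> bool" where
  "coalg_hom sc \<Delta> \<epsilon> B \<longleftrightarrow>
     Vector_Spaces.linear sc sc B \<and>
     (\<forall>x. teq2 sc (\<Delta> (B x)) (map (\<lambda>(u, v). (B u, B v)) (\<Delta> x))) \<and>
     (\<forall>x. \<epsilon> (B x) = \<epsilon> x)"

definition desc_op :: "('h \<Rightarrow> ('h \<times> 'h) list) \<Rightarrow> ('h \<Rightarrow> 'h) \<Rightarrow> ('h \<Rightarrow> 'h) \<Rightarrow> ('h \<Rightarrow> 'h) \<Rightarrow> 'h \<Rightarrow> 'h \<Rightarrow> 'h::ring_1" where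
  "desc_op \<Delta> S B1 B2 a b = tsum (\<Delta> a) (\<lambda>u v. B1 u * b * S (B2 v))"

definition cocycle :: "('h \<Rightarrow> ('h \<times> 'h) list) \<Rightarrow> ('h \<Rightarrow> 'h) \<Rightarrow> ('h \<Rightarrow> 'h) \<Rightarrow> ('h \<Rightarrow> 'h) \<Rightarrow> 'h \<Rightarrow> 'h::ring_1" where
  "cocycle \<Delta> S B1 B2 a = tsum (\<Delta> a) (\<lambda>u v. B1 u * S (B2 v))"

definition H1 :: "('h \<Rightarrow> ('h \<times> 'h) list) \<Rightarrow> ('h \<Rightarrow> 'h) \<Rightarrow> ('h \<Rightarrow> 'h) \<Rightarrow> ('h \<Rightarrow> 'h) \<Rightarrow> 'h::ring_1 set" where
  "H1 \<Delta> S B1 B2 = range (cocycle \<Delta> S B1 B2)"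

definition rota_baxter_system ::
  "('f::field_char_0 \<Rightarrow> 'h::ring_1 \<Rightarrow> 'h) \<Rightarrow> ('h \<Rightarrow> ('h \<times> 'h) list) \<Rightarrow> ('h \<Rightarrow> 'f) \<Rightarrow> ('h \<Rightarrow> 'h)
    \<Rightarrow> ('h \<Rightarrow> 'h) \<Rightarrow> ('h \<Rightarrow> 'h) \<Rightarrow> bool" where
  "rota_baxter_system sc \<Delta> \<epsilon> S B1 B2 \<longleftrightarrow>
     hopf_algebra sc \<Delta> \<epsilon> S \<and> cocommutative sc \<Delta> \<and>
     coalg_hom sc \<Delta> \<epsilon> B1 \<and> coalg_hom sc \<Delta> \<epsilon> B2 \<and> B1 1 = 1 \<and> B2 1 = 1 \<and>
     (\<forall>a b. B1 a * B1 b = B1 (desc_op \<Delta> S B1 B2 a b)) \<and>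
     (\<forall>a b. B2 a * B2 b = B2 (desc_op \<Delta> S B1 B2 a b))"

definition comm_algebra :: "('f::field \<Rightarrow> 'a::comm_ring_1 \<Rightarrow> 'a) \<Rightarrow> bool" where
  "comm_algebra scA \<longleftrightarrow> Vector_Spaces.vector_space scA \<and> (\<forall>c x y. scA c (x * y) = scA c x * y)"

definition CharH :: "('f::field \<Rightarrow> 'h::ring_1 \<Rightarrow> 'h) \<Rightarrow> ('f \<Rightarrow> 'a::comm_ring_1 \<Rightarrow> 'a) \<Rightarrow> ('h \<Rightarrow> 'a) set" where
  "CharH sc scA = {f. Vector_Spaces.linear sc scA f \<and> (\<forall>x y. f (x * y) = f x * f y) \<and> f 1 = 1}"

text \<open>Char(H_{B1,B2}, A): unital algebra homomorphisms (H1, \<circ>, 1) -> A.  They are represented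
  by functions on H whose values outside H1 are irrelevant.\<close>
definition CharH1 ::
  "('f::field \<Rightarrow> 'h::ring_1 \<Rightarrow> 'h) \<Rightarrow> ('f \<Rightarrow> 'a::comm_ring_1 \<Rightarrow> 'a) \<Rightarrow> ('h \<Rightarrow> ('h \<times> 'h) list) \<Rightarrow> ('h \<Rightarrow> 'h)
    \<Rightarrow> ('h \<Rightarrow> 'h) \<Rightarrow> ('h \<Rightarrow> 'h) \<Rightarrow> ('h \<Rightarrow> 'a) set" where
  "CharH1 sc scA \<Delta> S B1 B2 = {k.
     (\<forall>x\<in>H1 \<Delta> S B1 B2. \<forall>y\<in>H1 \<Delta> S B1 B2. k (x + y) = k x + k y) \<and>
     (\<forall>c. \<forall>x\<in>H1 \<Delta> S B1 B2. k (sc c x) = scA c (k x)) \<and>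
     (\<forall>x\<in>H1 \<Delta> S B1 B2. \<forall>y\<in>H1 \<Delta> S B1 B2. k (desc_op \<Delta> S B1 B2 x y) = k x * k y) \<and>
     k 1 = 1}"

text \<open>Convolution in Char(H_{B1,B2}, A): conv_H1 ... g k a val  means  (g * k)(a) = val, computed
  with a representation of Delta(a) inside H1 (x) H1 (the coproduct of H1 is the restriction of Delta).\<close>
definition conv_H1 ::
  "('f::field \<Rightarrow> 'h::ring_1 \<Rightarrow> 'h) \<Rightarrow> ('h \<Rightarrow> ('h \<times> 'h) list) \<Rightarrow> ('h \<Rightarrow> 'h) \<Rightarrow> ('h \<Rightarrow> 'h) \<Rightarrow> ('h \<Rightarrow> 'h)
    \<Rightarrow> ('h \<Rightarrow> 'a::comm_ring_1) \<Rightarrow> ('h \<Rightarrow> 'a) \<Rightarrow> 'h \<Rightarrow> 'a \<Rightarrow> bool" where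
  "conv_H1 sc \<Delta> S B1 B2 g k a val \<longleftrightarrow>
     (\<exists>rep. set rep \<subseteq> H1 \<Delta> S B1 B2 \<times> H1 \<Delta> S B1 B2 \<and> teq2 sc rep (\<Delta> a) \<and>
            val = tsum rep (\<lambda>u v. g u * k v))"

definition ImB ::
  "('f::field \<Rightarrow> 'h::ring_1 \<Rightarrow> 'h) \<Rightarrow> ('f \<Rightarrow> 'a::comm_ring_1 \<Rightarrow> 'a) \<Rightarrow> ('h \<Rightarrow> ('h \<times> 'h) list) \<Rightarrow> ('h \<Rightarrow> 'h)
    \<Rightarrow> ('h \<Rightarrow> 'h) \<Rightarrow> ('h \<Rightarrow> 'h) \<Rightarrow> ('h \<Rightarrow> 'h) \<Rightarrow> ('h \<Rightarrow> 'a) set" where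
  "ImB sc scA \<Delta> S B1 B2 B = {g. \<exists>f\<in>CharH sc scA. \<forall>a\<in>H1 \<Delta> S B1 B2. g a = f (B a)}"

definition kerB ::
  "('f::field \<Rightarrow> 'h::ring_1 \<Rightarrow> 'h) \<Rightarrow> ('f \<Rightarrow> 'a::comm_ring_1 \<Rightarrow> 'a) \<Rightarrow> ('h \<Rightarrow> ('h \<times> 'h) list) \<Rightarrow> ('h \<Rightarrow> 'f)
    \<Rightarrow> ('h \<Rightarrow> 'h) \<Rightarrow> ('h \<Rightarrow> 'h) \<Rightarrow> ('h \<Rightarrow> 'h) \<Rightarrow> ('h \<Rightarrow> 'h) \<Rightarrow> ('h \<Rightarrow> 'a) set" where
  "kerB sc scA \<Delta> \<epsilon> S B1 B2 B =
     {f\<in>CharH sc scA. \<forall>a\<in>H1 \<Delta> S B1 B2. f (B a) = scA (\<epsilon> a) 1}"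

text \<open>G_{\<B>_1,\<B>_2}: pairs (f1, f2) in Im(\<B>_1) x Im(\<B>_2) with \<Theta>(f1 bar) = f2 bar, where
  \<Theta>(\<B>_1(f) bar) = \<B>_2(f) bar, i.e. f1 = \<B>_1(f) and f2 \<in> \<B>_2(f) * \<B>_2(ker \<B>_1).\<close>
definition G_B ::
  "('f::field \<Rightarrow> 'h::ring_1 \<Rightarrow> 'h) \<Rightarrow> ('f \<Rightarrow> 'a::comm_ring_1 \<Rightarrow> 'a) \<Rightarrow> ('h \<Rightarrow> ('h \<times> 'h) list) \<Rightarrow> ('h \<Rightarrow> 'f)
    \<Rightarrow> ('h \<Rightarrow> 'h) \<Rightarrow> ('h \<Rightarrow> 'h) \<Rightarrow> ('h \<Rightarrow> 'h) \<Rightarrow> (('h \<Rightarrow> 'a) \<times> ('h \<Rightarrow> 'a)) set" where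
  "G_B sc scA \<Delta> \<epsilon> S B1 B2 = {(f1, f2).
     f1 \<in> ImB sc scA \<Delta> S B1 B2 B1 \<and> f2 \<in> ImB sc scA \<Delta> S B1 B2 B2 \<and>
     (\<exists>f\<in>CharH sc scA. (\<forall>a\<in>H1 \<Delta> S B1 B2. f1 a = f (B1 a)) \<and>
        (\<exists>h\<in>kerB sc scA \<Delta> \<epsilon> S B1 B2 B1. \<forall>a\<in>H1 \<Delta> S B1 B2.
            conv_H1 sc \<Delta> S B1 B2 (\<lambda>x. f (B2 x)) (\<lambda>x. h (B2 x)) a (f2 a)))}"

end

theory Submission
  imports Defs
begin

text \<open>
  Write \<open>f1 = f \<circ> B1\<close> and \<open>f2 = (f \<circ> B2) * (h \<circ> B2)\<close> on \<open>H1\<close>, with characters \<open>f, h\<close> of \<open>H\<close>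
  and \<open>h \<circ> B1 = \<epsilon>\<close> on \<open>H1\<close>. As \<open>B2\<close> is a coalgebra map, \<open>f2 = \<phi> \<circ> B2\<close> for the character
  \<open>\<phi> = f * h\<close>, and \<open>\<phi> \<circ> S \<circ> B2\<close> is a convolution inverse of \<open>\<phi> \<circ> B2\<close> on all of \<open>H\<close>; hence
  \<open>f2\<^sup>-\<^sup>1 = \<phi> \<circ> S \<circ> B2\<close> on \<open>H1\<close>. Cocommutativity makes \<open>S\<close> a coalgebra map, so
  \<open>f1 * f2\<^sup>-\<^sup>1 = (f \<circ> B1) * (f \<circ> S \<circ> B2) * (h \<circ> S \<circ> B2) = (f \<circ> \<sigma>) * (h \<circ> S \<circ> B2)\<close>.
  Finally \<open>\<sigma>\<close> is an idempotent coalgebra map, so it fixes \<open>H1\<close> and \<open>\<Delta>(H1) \<subseteq> H1 \<otimes> H1\<close>;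
  together with \<open>h \<circ> S \<circ> B2 = h\<close> on \<open>H1\<close> (from \<open>h \<circ> B1 = \<epsilon>\<close> and \<open>h = h \<circ> \<sigma>\<close>) this turns the
  last convolution into \<open>f * h = \<phi>\<close> on \<open>H1\<close>.
\<close>

section \<open>Linear maps and Sweedler sums\<close>

definition linear_map ::
  "('f::field \<Rightarrow> 'b::ab_group_add \<Rightarrow> 'b) \<Rightarrow> ('f \<Rightarrow> 'c::ab_group_add \<Rightarrow> 'c) \<Rightarrow> ('b \<Rightarrow> 'c) \<Rightarrow> bool" where
  "linear_map s1 s2 g \<longleftrightarrow> (\<forall>x y. g (x + y) = g x + g y) \<and> (\<forall>c x. g (s1 c x) = s2 c (g x))"

lemma linear_iff_linear_map:
  "Vector_Spaces.linear s1 s2 g \<longleftrightarrow> vector_space s1 \<and> vector_space s2 \<and> linear_map s1 s2 g"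
  unfolding Vector_Spaces.linear_def module_hom_def module_hom_axioms_def linear_map_def
    module_iff_vector_space by auto

lemma linear_map_add: "linear_map s1 s2 g \<Longrightarrow> g (x + y) = g x + g y"
  by (simp add: linear_map_def)

lemma linear_map_scale: "linear_map s1 s2 g \<Longrightarrow> g (s1 c x) = s2 c (g x)"
  by (simp add: linear_map_def)

lemma linear_map_zero: "linear_map s1 s2 g \<Longrightarrow> g 0 = 0"
  using linear_map_add[of s1 s2 g 0 0] by simp

lemma linear_map_id: "linear_map s s (\<lambda>x. x)"
  by (simp add: linear_map_def)

lemma linear_map_compose: "linear_map s2 s3 g \<Longrightarrow> linear_map s1 s2 F \<Longrightarrow> linear_map s1 s3 (\<lambda>x. g (F x))"
  by (simp add: linear_map_def)

lemma vector_space_field: "vector_space ((*) :: 'f::field \<Rightarrow> 'f \<Rightarrow> 'f)"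
  by unfold_locales (simp_all add: algebra_simps)

lemma eq_if_linear_functionals_eq:
  fixes s :: "'f::field \<Rightarrow> 'v::ab_group_add \<Rightarrow> 'v"
  assumes vs: "vector_space s"
    and eq: "\<And>L::'v \<Rightarrow> 'f. linear_map s (*) L \<Longrightarrow> L a = L b"
  shows "a = b"
proof (rule ccontr)
  assume "a \<noteq> b"
  then have "\<not> module.dependent s {a - b}"
    using vector_space.dependent_single[OF vs] by simp
  interpret vector_space_pair s "(*) :: 'f \<Rightarrow> 'f \<Rightarrow> 'f"
    using vs vector_space_field by (simp add: vector_space_pair_def)
  obtain L where L: "Vector_Spaces.linear s (*) L" "L (a - b) = (1::'f)"
    using linear_independent_extend[OF \<open>\<not> module.dependent s {a - b}\<close>, of "\<lambda>_. 1"] by auto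
  then have "linear_map s (*) L" by (simp add: linear_iff_linear_map)
  then have "L a = L b" by (rule eq)
  moreover have "L (a - b) = L a - L b"
    using linear_map_add[OF \<open>linear_map s (*) L\<close>, of "a - b" b] by simp
  ultimately show False using L(2) by simp
qed

lemma subspace_agreement:
  fixes s1 :: "'f::field \<Rightarrow> 'b::ab_group_add \<Rightarrow> 'b" and s2 :: "'f \<Rightarrow> 'c::ab_group_add \<Rightarrow> 'c"
  assumes "vector_space s1" and W: "module.subspace s1 W" and g: "linear_map s1 s2 g"
    and add: "\<forall>x\<in>W. \<forall>y\<in>W. k (x + y) = k x + k y"
    and scale: "\<forall>c. \<forall>x\<in>W. k (s1 c x) = s2 c (k x)"
  shows "module.subspace s1 {x. x \<in> W \<and> g x = k x}"
proof -
  interpret vector_space s1 by fact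
  have "k (0 + 0) = k 0 + k 0"
    using add subspace_0[OF W] by blast
  then have "k 0 = 0" by simp
  show ?thesis
  proof (rule subspaceI)
    show "0 \<in> {x. x \<in> W \<and> g x = k x}"
      using subspace_0[OF W] linear_map_zero[OF g] \<open>k 0 = 0\<close> by simp
  next
    fix x y assume "x \<in> {x. x \<in> W \<and> g x = k x}" "y \<in> {x. x \<in> W \<and> g x = k x}"
    then show "x + y \<in> {x. x \<in> W \<and> g x = k x}"
      using subspace_add[OF W] add linear_map_add[OF g] by simp
  next
    fix c x assume "x \<in> {x. x \<in> W \<and> g x = k x}"
    then show "s1 c x \<in> {x. x \<in> W \<and> g x = k x}"
      using subspace_scale[OF W] scale linear_map_scale[OF g] by simp
  qed
qed

lemma linear_map_extend_from_subspace:
  fixes s1 :: "'f::field \<Rightarrow> 'b::ab_group_add \<Rightarrow> 'b" and s2 :: "'f \<Rightarrow> 'c::ab_group_add \<Rightarrow> 'c"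
  assumes vs1: "vector_space s1" and vs2: "vector_space s2" and W: "module.subspace s1 W"
    and add: "\<forall>x\<in>W. \<forall>y\<in>W. k (x + y) = k x + k y"
    and scale: "\<forall>c. \<forall>x\<in>W. k (s1 c x) = s2 c (k x)"
  shows "\<exists>g. linear_map s1 s2 g \<and> (\<forall>x\<in>W. g x = k x)"
proof -
  interpret V1: vector_space s1 by fact
  interpret V2: vector_space s2 by fact
  interpret vector_space_pair s1 s2 by unfold_locales
  obtain B where B: "B \<subseteq> W" "\<not> V1.dependent B" "W \<subseteq> V1.span B" "card B = V1.dim W"
    by (rule V1.basis_exists)
  obtain g where g: "Vector_Spaces.linear s1 s2 g" "\<forall>x\<in>B. g x = k x"
    using linear_independent_extend[OF B(2), of k] by (elim exE conjE)
  have lg: "linear_map s1 s2 g" using g(1) by (simp add: linear_iff_linear_map)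
  have "x \<in> W \<and> g x = k x" if "x \<in> V1.span B" for x
    using that
  proof (induction rule: V1.span_induct)
    case base
    show ?case by (rule subspace_agreement[OF vs1 W lg add scale])
  next
    case (step x)
    then show ?case using B(1) g(2) by auto
  qed
  with lg B(3) show ?thesis by auto
qed

lemma tsum_Nil [simp]: "tsum [] F = 0"
  by (simp add: tsum_def)

lemma tsum_Cons [simp]: "tsum (p # l) F = F (fst p) (snd p) + tsum l F"
  by (simp add: tsum_def split_def)

lemma tsum_append [simp]: "tsum (l1 @ l2) F = tsum l1 F + tsum l2 F"
  by (simp add: tsum_def)

lemma tsum_cong: "(\<And>u v. (u, v) \<in> set l \<Longrightarrow> F u v = G u v) \<Longrightarrow> tsum l F = tsum l G"
  by (induction l) auto

lemma tsum_add: "tsum l (\<lambda>u v. F u v + G u v) = tsum l F + tsum l G"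
  by (induction l) (auto simp: algebra_simps)

lemma tsum_zero: "tsum l (\<lambda>u v. 0) = 0"
  by (induction l) auto

lemma tsum_commute:
  "tsum l1 (\<lambda>u v. tsum l2 (\<lambda>p q. F u v p q)) = tsum l2 (\<lambda>p q. tsum l1 (\<lambda>u v. F u v p q))"
  by (induction l1) (simp_all add: tsum_zero tsum_add)

lemma tsum_mult_right: "tsum l F * (c::'a::ring) = tsum l (\<lambda>u v. F u v * c)"
  by (induction l) (auto simp: algebra_simps)

lemma tsum_mult_left: "(c::'a::ring) * tsum l F = tsum l (\<lambda>u v. c * F u v)"
  by (induction l) (auto simp: algebra_simps)

lemma tsum_map: "tsum (map f l) F = tsum l (\<lambda>u v. F (fst (f (u, v))) (snd (f (u, v))))"
  by (induction l) auto

lemma tsum_concat_map: "tsum (concat (map g l)) F = tsum l (\<lambda>u v. tsum (g (u, v)) F)"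
  by (induction l) auto

lemma linear_map_tsum: "linear_map s1 s2 g \<Longrightarrow> g (tsum l F) = tsum l (\<lambda>u v. g (F u v))"
  by (induction l) (auto simp: linear_map_add linear_map_zero)

lemma scale_tsum: "vector_space s \<Longrightarrow> s c (tsum l F) = tsum l (\<lambda>u v. s c (F u v))"
proof -
  assume "vector_space s"
  then interpret vector_space s .
  show ?thesis by (induction l) (auto simp: scale_right_distrib)
qed

lemma linear_map_tsum_fun:
  assumes "vector_space s2" and "\<And>u v. linear_map s1 s2 (\<lambda>x. G x u v)"
  shows "linear_map s1 s2 (\<lambda>x. tsum l (G x))"
proof -
  interpret vector_space s2 by fact
  show ?thesis
  proof (induction l)
    case Nil
    show ?case by (simp add: linear_map_def)
  next
    case (Cons p l)
    have "linear_map s1 s2 (\<lambda>x. G x (fst p) (snd p))" by (rule assms(2))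
    with Cons.IH show ?case by (simp add: linear_map_def scale_right_distrib add_ac)
  qed
qed

lemma sum_list_coprod_left:
  "sum_list (map (\<lambda>(x, y, z). g x y z) (coprod_left \<Delta> a))
   = tsum (\<Delta> a) (\<lambda>u v. tsum (\<Delta> u) (\<lambda>p q. g p q v))"
proof -
  have "sum_list (map (\<lambda>(x, y, z). g x y z) (map (\<lambda>(u1, u2). (u1, u2, v)) m)) = tsum m (\<lambda>p q. g p q v)"
    for m v by (induction m) auto
  then have "sum_list (map (\<lambda>(x, y, z). g x y z) (concat (map (\<lambda>(u, v). map (\<lambda>(u1, u2). (u1, u2, v)) (\<Delta> u)) l)))
      = tsum l (\<lambda>u v. tsum (\<Delta> u) (\<lambda>p q. g p q v))" for l
    by (induction l) (auto simp: split_def)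
  then show ?thesis unfolding coprod_left_def .
qed

lemma sum_list_coprod_right:
  "sum_list (map (\<lambda>(x, y, z). g x y z) (coprod_right \<Delta> a))
   = tsum (\<Delta> a) (\<lambda>u v. tsum (\<Delta> v) (\<lambda>p q. g u p q))"
proof -
  have "sum_list (map (\<lambda>(x, y, z). g x y z) (map (\<lambda>(v1, v2). (u, v1, v2)) m)) = tsum m (\<lambda>p q. g u p q)"
    for m u by (induction m) auto
  then have "sum_list (map (\<lambda>(x, y, z). g x y z) (concat (map (\<lambda>(u, v). map (\<lambda>(v1, v2). (u, v1, v2)) (\<Delta> v)) l)))
      = tsum l (\<lambda>u v. tsum (\<Delta> v) (\<lambda>p q. g u p q))" for l
    by (induction l) (auto simp: split_def)
  then show ?thesis unfolding coprod_right_def .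
qed

definition bilinear_map ::
  "('f::field \<Rightarrow> 'b::ab_group_add \<Rightarrow> 'b) \<Rightarrow> ('f \<Rightarrow> 'c::ab_group_add \<Rightarrow> 'c) \<Rightarrow> ('b \<Rightarrow> 'b \<Rightarrow> 'c) \<Rightarrow> bool" where
  "bilinear_map s1 s2 G \<longleftrightarrow> (\<forall>v. linear_map s1 s2 (\<lambda>u. G u v)) \<and> (\<forall>u. linear_map s1 s2 (\<lambda>v. G u v))"

definition trilinear_map ::
  "('f::field \<Rightarrow> 'b::ab_group_add \<Rightarrow> 'b) \<Rightarrow> ('f \<Rightarrow> 'c::ab_group_add \<Rightarrow> 'c) \<Rightarrow> ('b \<Rightarrow> 'b \<Rightarrow> 'b \<Rightarrow> 'c) \<Rightarrow> bool" where
  "trilinear_map s1 s2 G \<longleftrightarrow>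
     (\<forall>y z. linear_map s1 s2 (\<lambda>x. G x y z)) \<and> (\<forall>x z. linear_map s1 s2 (\<lambda>y. G x y z)) \<and>
     (\<forall>x y. linear_map s1 s2 (\<lambda>z. G x y z))"

lemma bilinear_mapI:
  "(\<And>v. linear_map s1 s2 (\<lambda>u. G u v)) \<Longrightarrow> (\<And>u. linear_map s1 s2 (\<lambda>v. G u v)) \<Longrightarrow> bilinear_map s1 s2 G"
  by (simp add: bilinear_map_def)

lemma bilinear_map_left: "bilinear_map s1 s2 G \<Longrightarrow> linear_map s1 s2 (\<lambda>u. G u v)"
  by (simp add: bilinear_map_def)

lemma bilinear_map_right: "bilinear_map s1 s2 G \<Longrightarrow> linear_map s1 s2 (\<lambda>v. G u v)"
  by (simp add: bilinear_map_def)

lemma trilinear_mapI: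
  "(\<And>y z. linear_map s1 s2 (\<lambda>x. G x y z)) \<Longrightarrow> (\<And>x z. linear_map s1 s2 (\<lambda>y. G x y z)) \<Longrightarrow>
   (\<And>x y. linear_map s1 s2 (\<lambda>z. G x y z)) \<Longrightarrow> trilinear_map s1 s2 G"
  by (simp add: trilinear_map_def)

section \<open>Hopf algebras\<close>

locale hopf =
  fixes sc :: "'f::field \<Rightarrow> 'h::ring_1 \<Rightarrow> 'h"
    and \<Delta> :: "'h \<Rightarrow> ('h \<times> 'h) list" and \<epsilon> :: "'h \<Rightarrow> 'f" and S :: "'h \<Rightarrow> 'h"
  assumes hopf_algebra: "hopf_algebra sc \<Delta> \<epsilon> S"
begin

lemma vector_space_H: "vector_space sc"
  using hopf_algebra unfolding hopf_algebra_def by blast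

lemma scale_mult_left: "sc c (x * y) = sc c x * y"
  using hopf_algebra unfolding hopf_algebra_def by blast

lemma scale_mult_right: "sc c (x * y) = x * sc c y"
  using hopf_algebra unfolding hopf_algebra_def by blast

lemma coproduct_add: "teq2 sc (\<Delta> (x + y)) (\<Delta> x @ \<Delta> y)"
  using hopf_algebra unfolding hopf_algebra_def by blast

lemma coproduct_scale: "teq2 sc (\<Delta> (sc c x)) (map (\<lambda>(u, v). (sc c u, v)) (\<Delta> x))"
  using hopf_algebra unfolding hopf_algebra_def by blast

lemma coproduct_coassoc: "teq3 sc (coprod_left \<Delta> x) (coprod_right \<Delta> x)"
  using hopf_algebra unfolding hopf_algebra_def by blast

lemma linear_map_counit: "linear_map sc (*) \<epsilon>"
  using hopf_algebra unfolding hopf_algebra_def linear_iff_linear_map by blast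

lemma counit_left: "tsum (\<Delta> x) (\<lambda>u v. sc (\<epsilon> u) v) = x"
  using hopf_algebra unfolding hopf_algebra_def by blast

lemma counit_right: "tsum (\<Delta> x) (\<lambda>u v. sc (\<epsilon> v) u) = x"
  using hopf_algebra unfolding hopf_algebra_def by blast

lemma coproduct_mult: "teq2 sc (\<Delta> (x * y)) [(u * u', v * v'). (u, v) \<leftarrow> \<Delta> x, (u', v') \<leftarrow> \<Delta> y]"
  using hopf_algebra unfolding hopf_algebra_def by blast

lemma coproduct_one: "teq2 sc (\<Delta> 1) [(1, 1)]"
  using hopf_algebra unfolding hopf_algebra_def by blast

lemma linear_map_antipode: "linear_map sc sc S"
  using hopf_algebra unfolding hopf_algebra_def linear_iff_linear_map by blast

lemma antipode_left: "tsum (\<Delta> x) (\<lambda>u v. S u * v) = sc (\<epsilon> x) 1"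
  using hopf_algebra unfolding hopf_algebra_def by blast

lemma antipode_right: "tsum (\<Delta> x) (\<lambda>u v. u * S v) = sc (\<epsilon> x) 1"
  using hopf_algebra unfolding hopf_algebra_def by blast

lemma linear_map_mult_right: "linear_map s1 sc F \<Longrightarrow> linear_map s1 sc (\<lambda>x. F x * c)"
  by (simp add: linear_map_def scale_mult_left distrib_right)

lemma linear_map_mult_left: "linear_map s1 sc F \<Longrightarrow> linear_map s1 sc (\<lambda>x. c * F x)"
  by (simp add: linear_map_def scale_mult_right[symmetric] distrib_left)

text \<open>
  Identities in \<open>H \<otimes> H\<close> are stated by pairing both sides with an arbitrary bilinear map \<open>G\<close> into
  a vector space; linear functionals on that space reduce this to the bilinear forms of \<open>teq2\<close>.
\<close>

lemma tsum_teq2: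
  fixes sV :: "'f \<Rightarrow> 'v::ab_group_add \<Rightarrow> 'v"
  assumes vs: "vector_space sV" and G: "bilinear_map sc sV G" and eq: "teq2 sc l1 l2"
  shows "tsum l1 G = tsum l2 G"
proof (rule eq_if_linear_functionals_eq[OF vs])
  fix L :: "'v \<Rightarrow> 'f" assume L: "linear_map sV (*) L"
  have "bilin_form sc (\<lambda>u v. L (G u v))"
    unfolding bilin_form_def linear_iff_linear_map
    using vector_space_H vector_space_field linear_map_compose[OF L bilinear_map_left[OF G]]
      linear_map_compose[OF L bilinear_map_right[OF G]] by auto
  then have "tsum l1 (\<lambda>u v. L (G u v)) = tsum l2 (\<lambda>u v. L (G u v))"
    using eq by (simp add: teq2_def)
  then show "L (tsum l1 G) = L (tsum l2 G)"
    by (simp add: linear_map_tsum[OF L])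
qed

lemma tsum_coassoc:
  fixes sV :: "'f \<Rightarrow> 'v::ab_group_add \<Rightarrow> 'v"
  assumes vs: "vector_space sV" and G: "trilinear_map sc sV G"
  shows "tsum (\<Delta> x) (\<lambda>u v. tsum (\<Delta> u) (\<lambda>p q. G p q v))
       = tsum (\<Delta> x) (\<lambda>u v. tsum (\<Delta> v) (\<lambda>p q. G u p q))"
proof (rule eq_if_linear_functionals_eq[OF vs])
  fix L :: "'v \<Rightarrow> 'f" assume L: "linear_map sV (*) L"
  have "trilin_form sc (\<lambda>a b c. L (G a b c))"
    using G unfolding trilin_form_def linear_iff_linear_map trilinear_map_def
    using vector_space_H vector_space_field linear_map_compose[OF L] by blast
  then have "sum_list (map (\<lambda>(a, b, c). L (G a b c)) (coprod_left \<Delta> x)) =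
             sum_list (map (\<lambda>(a, b, c). L (G a b c)) (coprod_right \<Delta> x))"
    using coproduct_coassoc[of x] by (simp add: teq3_def)
  then show "L (tsum (\<Delta> x) (\<lambda>u v. tsum (\<Delta> u) (\<lambda>p q. G p q v)))
           = L (tsum (\<Delta> x) (\<lambda>u v. tsum (\<Delta> v) (\<lambda>p q. G u p q)))"
    unfolding sum_list_coprod_left sum_list_coprod_right by (simp add: linear_map_tsum[OF L])
qed

lemma linear_map_tsum_coproduct:
  fixes sV :: "'f \<Rightarrow> 'v::ab_group_add \<Rightarrow> 'v"
  assumes vs: "vector_space sV" and G: "bilinear_map sc sV G"
  shows "linear_map sc sV (\<lambda>x. tsum (\<Delta> x) G)"
  unfolding linear_map_def
proof safe
  fix x y
  show "tsum (\<Delta> (x + y)) G = tsum (\<Delta> x) G + tsum (\<Delta> y) G"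
    using tsum_teq2[OF vs G coproduct_add[of x y]] by simp
next
  fix c x
  have "tsum (\<Delta> (sc c x)) G = tsum (map (\<lambda>(u, v). (sc c u, v)) (\<Delta> x)) G"
    using tsum_teq2[OF vs G coproduct_scale[of c x]] .
  also have "\<dots> = tsum (\<Delta> x) (\<lambda>u v. sV c (G u v))"
    by (simp add: tsum_map split_def linear_map_scale[OF bilinear_map_left[OF G]])
  also have "\<dots> = sV c (tsum (\<Delta> x) G)"
    by (simp add: scale_tsum[OF vs])
  finally show "tsum (\<Delta> (sc c x)) G = sV c (tsum (\<Delta> x) G)" .
qed

lemma linear_map_tsum_coproduct_compose:
  fixes sV :: "'f \<Rightarrow> 'v::ab_group_add \<Rightarrow> 'v"
  assumes vs: "vector_space sV" and F: "linear_map s1 sc F"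
    and G1: "\<And>v. linear_map sc sV (\<lambda>u. G u v)" and G2: "\<And>u. linear_map sc sV (\<lambda>v. G u v)"
  shows "linear_map s1 sV (\<lambda>x. tsum (\<Delta> (F x)) G)"
  using linear_map_compose[OF linear_map_tsum_coproduct[OF vs bilinear_mapI[OF G1 G2]] F] .

lemma tsum_counit_left:
  assumes g: "linear_map sc sV g"
  shows "tsum (\<Delta> x) (\<lambda>u v. sV (\<epsilon> u) (g v)) = g x"
  using linear_map_tsum[OF g, of "\<Delta> x" "\<lambda>u v. sc (\<epsilon> u) v"]
  by (simp add: counit_left linear_map_scale[OF g])

lemma tsum_counit_right:
  assumes g: "linear_map sc sV g"
  shows "tsum (\<Delta> x) (\<lambda>u v. sV (\<epsilon> v) (g u)) = g x"
  using linear_map_tsum[OF g, of "\<Delta> x" "\<lambda>u v. sc (\<epsilon> v) u"]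
  by (simp add: counit_right linear_map_scale[OF g])

lemma tsum_coproduct_mult:
  fixes sV :: "'f \<Rightarrow> 'v::ab_group_add \<Rightarrow> 'v"
  assumes vs: "vector_space sV" and G: "bilinear_map sc sV G"
  shows "tsum (\<Delta> (x * y)) G = tsum (\<Delta> x) (\<lambda>u v. tsum (\<Delta> y) (\<lambda>u' v'. G (u * u') (v * v')))"
  using tsum_teq2[OF vs G coproduct_mult[of x y]]
  by (simp add: tsum_concat_map tsum_map split_def)

lemma tsum_coproduct_one:
  fixes sV :: "'f \<Rightarrow> 'v::ab_group_add \<Rightarrow> 'v"
  assumes vs: "vector_space sV" and G: "bilinear_map sc sV G"
  shows "tsum (\<Delta> 1) G = G 1 1"
  using tsum_teq2[OF vs G coproduct_one] by simp

lemma tsum_coproduct_coalg_hom: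
  fixes sV :: "'f \<Rightarrow> 'v::ab_group_add \<Rightarrow> 'v"
  assumes vs: "vector_space sV" and G: "bilinear_map sc sV G" and B: "coalg_hom sc \<Delta> \<epsilon> B"
  shows "tsum (\<Delta> (B x)) G = tsum (\<Delta> x) (\<lambda>u v. G (B u) (B v))"
proof -
  have "teq2 sc (\<Delta> (B x)) (map (\<lambda>(u, v). (B u, B v)) (\<Delta> x))"
    using B by (simp add: coalg_hom_def)
  from tsum_teq2[OF vs G this] show ?thesis by (simp add: tsum_map split_def)
qed

lemma linear_map_counit_scale:
  fixes sV :: "'f \<Rightarrow> 'v::ab_group_add \<Rightarrow> 'v"
  assumes vs: "vector_space sV"
  shows "linear_map sc sV (\<lambda>u. sV (\<epsilon> u) c)"
proof -
  interpret vector_space sV by fact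
  show ?thesis using linear_map_counit unfolding linear_map_def by (simp add: scale_left_distrib)
qed

lemma tsum_coassoc4:
  fixes sV :: "'f \<Rightarrow> 'v::ab_group_add \<Rightarrow> 'v"
  assumes vs: "vector_space sV"
    and q1: "\<And>b c d. linear_map sc sV (\<lambda>a. \<delta> a b c d)" and q2: "\<And>a c d. linear_map sc sV (\<lambda>b. \<delta> a b c d)"
    and q3: "\<And>a b d. linear_map sc sV (\<lambda>c. \<delta> a b c d)" and q4: "\<And>a b c. linear_map sc sV (\<lambda>d. \<delta> a b c d)"
  shows "tsum (\<Delta> y) (\<lambda>u v. tsum (\<Delta> u) (\<lambda>a b. tsum (\<Delta> v) (\<lambda>c d. \<delta> a b c d)))
       = tsum (\<Delta> y) (\<lambda>u v. tsum (\<Delta> v) (\<lambda>p d. tsum (\<Delta> p) (\<lambda>b c. \<delta> u b c d)))"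
proof -
  have "trilinear_map sc sV (\<lambda>p q v. tsum (\<Delta> v) (\<lambda>c d. \<delta> p q c d))"
    by (intro trilinear_mapI linear_map_tsum_fun[OF vs]
        linear_map_tsum_coproduct_compose[OF vs linear_map_id] q1 q2 q3 q4)
  then have "tsum (\<Delta> y) (\<lambda>u v. tsum (\<Delta> u) (\<lambda>a b. tsum (\<Delta> v) (\<lambda>c d. \<delta> a b c d)))
      = tsum (\<Delta> y) (\<lambda>u v. tsum (\<Delta> v) (\<lambda>p q. tsum (\<Delta> q) (\<lambda>c d. \<delta> u p c d)))"
    using tsum_coassoc[OF vs] by simp
  also have "\<dots> = tsum (\<Delta> y) (\<lambda>u v. tsum (\<Delta> v) (\<lambda>p d. tsum (\<Delta> p) (\<lambda>b c. \<delta> u b c d)))"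
  proof (rule tsum_cong)
    fix u v
    have "trilinear_map sc sV (\<lambda>b c d. \<delta> u b c d)"
      by (intro trilinear_mapI q2 q3 q4)
    then show "tsum (\<Delta> v) (\<lambda>p q. tsum (\<Delta> q) (\<lambda>c d. \<delta> u p c d))
             = tsum (\<Delta> v) (\<lambda>p d. tsum (\<Delta> p) (\<lambda>b c. \<delta> u b c d))"
      using tsum_coassoc[OF vs, of _ v] by simp
  qed
  finally show ?thesis .
qed

lemma tsum_antipode_conv_coproduct:
  fixes sV :: "'f \<Rightarrow> 'v::ab_group_add \<Rightarrow> 'v"
  assumes vs: "vector_space sV" and G: "bilinear_map sc sV G"
  shows "tsum (\<Delta> x) (\<lambda>u v. tsum (\<Delta> (S u)) (\<lambda>p q. tsum (\<Delta> v) (\<lambda>p' q'. G (p * p') (q * q'))))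
       = sV (\<epsilon> x) (G 1 1)"
proof -
  have g: "linear_map sc sV (\<lambda>z. tsum (\<Delta> z) G)" by (rule linear_map_tsum_coproduct[OF vs G])
  have "tsum (\<Delta> x) (\<lambda>u v. tsum (\<Delta> (S u)) (\<lambda>p q. tsum (\<Delta> v) (\<lambda>p' q'. G (p * p') (q * q'))))
      = tsum (\<Delta> x) (\<lambda>u v. tsum (\<Delta> (S u * v)) G)"
    by (simp add: tsum_coproduct_mult[OF vs G])
  also have "\<dots> = tsum (\<Delta> (tsum (\<Delta> x) (\<lambda>u v. S u * v))) G"
    by (simp add: linear_map_tsum[OF g])
  also have "\<dots> = sV (\<epsilon> x) (G 1 1)"
    by (simp add: antipode_left linear_map_scale[OF g] tsum_coproduct_one[OF vs G])
  finally show ?thesis .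
qed

end

locale cocomm_hopf = hopf sc \<Delta> \<epsilon> S
  for sc :: "'f::field \<Rightarrow> 'h::ring_1 \<Rightarrow> 'h" and \<Delta> \<epsilon> S +
  assumes cocommutative: "cocommutative sc \<Delta>"
begin

lemma tsum_cocomm:
  fixes sV :: "'f \<Rightarrow> 'v::ab_group_add \<Rightarrow> 'v"
  assumes vs: "vector_space sV" and G: "bilinear_map sc sV G"
  shows "tsum (\<Delta> x) G = tsum (\<Delta> x) (\<lambda>u v. G v u)"
proof -
  have "teq2 sc (\<Delta> x) (map (\<lambda>(u, v). (v, u)) (\<Delta> x))"
    using cocommutative by (simp add: cocommutative_def)
  from tsum_teq2[OF vs G this] show ?thesis by (simp add: tsum_map split_def)
qed

lemma tsum_cocomm_middle:
  fixes sV :: "'f \<Rightarrow> 'v::ab_group_add \<Rightarrow> 'v"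
  assumes vs: "vector_space sV"
    and q1: "\<And>b c d. linear_map sc sV (\<lambda>a. \<delta> a b c d)" and q2: "\<And>a c d. linear_map sc sV (\<lambda>b. \<delta> a b c d)"
    and q3: "\<And>a b d. linear_map sc sV (\<lambda>c. \<delta> a b c d)" and q4: "\<And>a b c. linear_map sc sV (\<lambda>d. \<delta> a b c d)"
  shows "tsum (\<Delta> y) (\<lambda>u v. tsum (\<Delta> u) (\<lambda>a b. tsum (\<Delta> v) (\<lambda>c d. \<delta> a b c d)))
       = tsum (\<Delta> y) (\<lambda>u v. tsum (\<Delta> u) (\<lambda>a c. tsum (\<Delta> v) (\<lambda>b d. \<delta> a b c d)))"
proof -
  have "tsum (\<Delta> y) (\<lambda>u v. tsum (\<Delta> u) (\<lambda>a b. tsum (\<Delta> v) (\<lambda>c d. \<delta> a b c d)))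
       = tsum (\<Delta> y) (\<lambda>u v. tsum (\<Delta> v) (\<lambda>p d. tsum (\<Delta> p) (\<lambda>b c. \<delta> u b c d)))"
    by (rule tsum_coassoc4[OF vs q1 q2 q3 q4])
  also have "\<dots> = tsum (\<Delta> y) (\<lambda>u v. tsum (\<Delta> v) (\<lambda>p d. tsum (\<Delta> p) (\<lambda>b c. \<delta> u c b d)))"
    by (intro tsum_cong tsum_cocomm[OF vs] bilinear_mapI q2 q3)
  also have "\<dots> = tsum (\<Delta> y) (\<lambda>u v. tsum (\<Delta> u) (\<lambda>a c. tsum (\<Delta> v) (\<lambda>b d. \<delta> a b c d)))"
    by (rule tsum_coassoc4[OF vs, of "\<lambda>a b c d. \<delta> a c b d", symmetric]) (auto intro: q1 q2 q3 q4)
  finally show ?thesis .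
qed

lemma tsum_coproduct_conv_antipode:
  fixes sV :: "'f \<Rightarrow> 'v::ab_group_add \<Rightarrow> 'v"
  assumes vs: "vector_space sV" and G: "bilinear_map sc sV G"
  shows "tsum (\<Delta> y) (\<lambda>u v. tsum (\<Delta> u) (\<lambda>a b. tsum (\<Delta> v) (\<lambda>c d. G (a * S c) (b * S d))))
       = sV (\<epsilon> y) (G 1 1)"
proof -
  note G1 = bilinear_map_left[OF G] and G2 = bilinear_map_right[OF G]
  have inner: "tsum (\<Delta> u) (\<lambda>a c. tsum (\<Delta> v) (\<lambda>b d. G (a * S c) (b * S d)))
             = sV (\<epsilon> v) (sV (\<epsilon> u) (G 1 1))" for u v
  proof -
    have "tsum (\<Delta> u) (\<lambda>a c. tsum (\<Delta> v) (\<lambda>b d. G (a * S c) (b * S d)))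
        = tsum (\<Delta> u) (\<lambda>a c. sV (\<epsilon> v) (G (a * S c) 1))"
    proof (rule tsum_cong)
      fix a c
      have "tsum (\<Delta> v) (\<lambda>b d. G (a * S c) (b * S d)) = G (a * S c) (tsum (\<Delta> v) (\<lambda>b d. b * S d))"
        by (simp add: linear_map_tsum[OF G2])
      then show "tsum (\<Delta> v) (\<lambda>b d. G (a * S c) (b * S d)) = sV (\<epsilon> v) (G (a * S c) 1)"
        by (simp add: antipode_right linear_map_scale[OF G2])
    qed
    also have "\<dots> = sV (\<epsilon> v) (G (tsum (\<Delta> u) (\<lambda>a c. a * S c)) 1)"
      by (simp add: linear_map_tsum[OF G1] scale_tsum[OF vs])
    also have "\<dots> = sV (\<epsilon> v) (sV (\<epsilon> u) (G 1 1))"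
      by (simp add: antipode_right linear_map_scale[OF G1])
    finally show ?thesis .
  qed
  have "tsum (\<Delta> y) (\<lambda>u v. tsum (\<Delta> u) (\<lambda>a b. tsum (\<Delta> v) (\<lambda>c d. G (a * S c) (b * S d))))
      = tsum (\<Delta> y) (\<lambda>u v. tsum (\<Delta> u) (\<lambda>a c. tsum (\<Delta> v) (\<lambda>b d. G (a * S c) (b * S d))))"
    by (rule tsum_cocomm_middle[OF vs])
      (intro linear_map_compose[OF G1] linear_map_compose[OF G2] linear_map_mult_right
        linear_map_mult_left linear_map_id linear_map_compose[OF linear_map_antipode])+
  also have "\<dots> = sV (\<epsilon> y) (G 1 1)"
    unfolding inner by (rule tsum_counit_right[OF linear_map_counit_scale[OF vs]])
  finally show ?thesis .
qed

text \<open>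
  \<open>(\<Delta> \<circ> S * \<Delta> * (S \<otimes> S) \<circ> \<Delta>)(x)\<close>, paired with \<open>G\<close>. Associativity of convolution evaluates it
  in two ways, showing that \<open>\<Delta> \<circ> S = (S \<otimes> S) \<circ> \<Delta>\<close> (both are inverses of \<open>\<Delta>\<close>).
\<close>

definition antipode_conv_triple :: "('h \<Rightarrow> 'h \<Rightarrow> 'v::ab_group_add) \<Rightarrow> 'h \<Rightarrow> 'v" where
  "antipode_conv_triple G x = tsum (\<Delta> x) (\<lambda>u v. tsum (\<Delta> v) (\<lambda>a b. tsum (\<Delta> b) (\<lambda>v1 v2.
     tsum (\<Delta> (S u)) (\<lambda>p q. tsum (\<Delta> a) (\<lambda>p' q'. G (p * p' * S v1) (q * q' * S v2))))))"

lemma antipode_conv_triple_eq_coproduct_antipode: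
  fixes sV :: "'f \<Rightarrow> 'v::ab_group_add \<Rightarrow> 'v"
  assumes vs: "vector_space sV" and G: "bilinear_map sc sV G"
  shows "antipode_conv_triple G x = tsum (\<Delta> (S x)) G"
proof -
  have "antipode_conv_triple G x = tsum (\<Delta> x) (\<lambda>u v. tsum (\<Delta> (S u)) (\<lambda>p q. sV (\<epsilon> v) (G p q)))"
    unfolding antipode_conv_triple_def
  proof (rule tsum_cong)
    fix u v
    have "bilinear_map sc sV (\<lambda>a b. G (p * a) (q * b))" for p q
      by (intro bilinear_mapI linear_map_compose[OF bilinear_map_left[OF G]]
          linear_map_compose[OF bilinear_map_right[OF G]] linear_map_mult_left linear_map_id)
    then have inner: "tsum (\<Delta> v) (\<lambda>a b. tsum (\<Delta> a) (\<lambda>p' q'. tsum (\<Delta> b) (\<lambda>v1 v2.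
        G (p * (p' * S v1)) (q * (q' * S v2))))) = sV (\<epsilon> v) (G p q)" for p q
      using tsum_coproduct_conv_antipode[OF vs, of "\<lambda>a b. G (p * a) (q * b)" v] by simp
    have "tsum (\<Delta> b) (\<lambda>v1 v2. tsum (\<Delta> (S u)) (\<lambda>p q. tsum (\<Delta> a) (\<lambda>p' q'. G (p * p' * S v1) (q * q' * S v2))))
       = tsum (\<Delta> (S u)) (\<lambda>p q. tsum (\<Delta> a) (\<lambda>p' q'. tsum (\<Delta> b) (\<lambda>v1 v2. G (p * (p' * S v1)) (q * (q' * S v2)))))"
      for a b
      unfolding tsum_commute[of "\<Delta> b" "\<Delta> (S u)"]
      by (intro tsum_cong) (simp add: tsum_commute[of "\<Delta> b" "\<Delta> a"] mult.assoc)
    then show "tsum (\<Delta> v) (\<lambda>a b. tsum (\<Delta> b) (\<lambda>v1 v2. tsum (\<Delta> (S u)) (\<lambda>p q. tsum (\<Delta> a) (\<lambda>p' q'.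
        G (p * p' * S v1) (q * q' * S v2))))) = tsum (\<Delta> (S u)) (\<lambda>p q. sV (\<epsilon> v) (G p q))"
      by (simp add: tsum_commute[of "\<Delta> v" "\<Delta> (S u)"] inner)
  qed
  also have "\<dots> = tsum (\<Delta> x) (\<lambda>u v. sV (\<epsilon> v) (tsum (\<Delta> (S u)) G))"
    by (simp add: scale_tsum[OF vs])
  also have "\<dots> = tsum (\<Delta> (S x)) G"
    by (rule tsum_counit_right[OF linear_map_tsum_coproduct_compose[OF vs linear_map_antipode
          bilinear_map_left[OF G] bilinear_map_right[OF G]]])
  finally show ?thesis .
qed

lemma antipode_conv_triple_eq_antipode_tensor_coproduct:
  fixes sV :: "'f \<Rightarrow> 'v::ab_group_add \<Rightarrow> 'v"
  assumes vs: "vector_space sV" and G: "bilinear_map sc sV G"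
  shows "antipode_conv_triple G x = tsum (\<Delta> x) (\<lambda>u v. G (S u) (S v))"
proof -
  note L = linear_map_compose[OF bilinear_map_left[OF G]] linear_map_compose[OF bilinear_map_right[OF G]]
    linear_map_mult_right linear_map_mult_left linear_map_id linear_map_compose[OF linear_map_antipode]
    linear_map_antipode linear_map_tsum_fun[OF vs] linear_map_tsum_coproduct_compose[OF vs]
  define U where "U z = tsum (\<Delta> z) (\<lambda>u v. G (S u) (S v))" for z
  have "linear_map sc sV U" unfolding U_def by (intro L)+
  then have "U x = tsum (\<Delta> x) (\<lambda>u v. sV (\<epsilon> u) (U v))"
    by (rule tsum_counit_left[symmetric])
  also have "\<dots> = tsum (\<Delta> x) (\<lambda>u v. tsum (\<Delta> v) (\<lambda>v1 v2. tsum (\<Delta> u) (\<lambda>u1 u2.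
       tsum (\<Delta> (S u1)) (\<lambda>p q. tsum (\<Delta> u2) (\<lambda>p' q'. G (p * p' * S v1) (q * q' * S v2))))))"
  proof -
    have "sV (\<epsilon> u) (G (S v1) (S v2)) = tsum (\<Delta> u) (\<lambda>u1 u2.
       tsum (\<Delta> (S u1)) (\<lambda>p q. tsum (\<Delta> u2) (\<lambda>p' q'. G (p * p' * S v1) (q * q' * S v2))))" for u v1 v2
    proof -
      have "bilinear_map sc sV (\<lambda>p q. G (p * S v1) (q * S v2))" by (intro bilinear_mapI L)+
      from tsum_antipode_conv_coproduct[OF vs this, of u] show ?thesis by (simp add: mult.assoc)
    qed
    then show ?thesis unfolding U_def by (simp add: scale_tsum[OF vs])
  qed
  also have "\<dots> = tsum (\<Delta> x) (\<lambda>u v. tsum (\<Delta> u) (\<lambda>u1 u2. tsum (\<Delta> v) (\<lambda>v1 v2.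
       tsum (\<Delta> (S u1)) (\<lambda>p q. tsum (\<Delta> u2) (\<lambda>p' q'. G (p * p' * S v1) (q * q' * S v2))))))"
    by (rule tsum_cong) (rule tsum_commute)
  also have "\<dots> = antipode_conv_triple G x"
    unfolding antipode_conv_triple_def by (rule tsum_coassoc[OF vs]) (intro trilinear_mapI L)+
  finally show ?thesis unfolding U_def by (rule sym)
qed

lemma tsum_coproduct_antipode:
  fixes sV :: "'f \<Rightarrow> 'v::ab_group_add \<Rightarrow> 'v"
  assumes vs: "vector_space sV" and G: "bilinear_map sc sV G"
  shows "tsum (\<Delta> (S x)) G = tsum (\<Delta> x) (\<lambda>u v. G (S u) (S v))"
  using antipode_conv_triple_eq_coproduct_antipode[OF vs G]
    antipode_conv_triple_eq_antipode_tensor_coproduct[OF vs G] by simp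

end

section \<open>Rota-Baxter systems and the cocycle\<close>

locale rb_system = cocomm_hopf sc \<Delta> \<epsilon> S
  for sc :: "'f::field \<Rightarrow> 'h::ring_1 \<Rightarrow> 'h" and \<Delta> \<epsilon> S +
  fixes B1 B2 :: "'h \<Rightarrow> 'h"
  assumes coalg_hom_B1: "coalg_hom sc \<Delta> \<epsilon> B1" and coalg_hom_B2: "coalg_hom sc \<Delta> \<epsilon> B2"
    and B1_mult: "\<And>a b. B1 a * B1 b = B1 (desc_op \<Delta> S B1 B2 a b)"
    and B2_mult: "\<And>a b. B2 a * B2 b = B2 (desc_op \<Delta> S B1 B2 a b)"
    and B1_one: "B1 1 = 1" and B2_one: "B2 1 = 1"
begin

abbreviation \<sigma> :: "'h \<Rightarrow> 'h" where "\<sigma> \<equiv> cocycle \<Delta> S B1 B2"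

lemma linear_map_B1: "linear_map sc sc B1"
  using coalg_hom_B1 by (simp add: coalg_hom_def linear_iff_linear_map)

lemma linear_map_B2: "linear_map sc sc B2"
  using coalg_hom_B2 by (simp add: coalg_hom_def linear_iff_linear_map)

lemma B1_cocycle: "B1 (\<sigma> a) = B1 a"
  using B1_mult[of a 1] by (simp add: desc_op_def cocycle_def B1_one)

lemma B2_cocycle: "B2 (\<sigma> a) = B2 a"
  using B2_mult[of a 1] by (simp add: desc_op_def cocycle_def B2_one)

lemmas linear_map_intros = linear_map_mult_right linear_map_mult_left linear_map_id
  linear_map_compose[OF linear_map_antipode] linear_map_antipode linear_map_compose[OF linear_map_B1]
  linear_map_B1 linear_map_compose[OF linear_map_B2] linear_map_B2 bilinear_mapI

lemma linear_map_cocycle: "linear_map sc sc \<sigma>"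
  unfolding cocycle_def[abs_def] by (intro linear_map_tsum_coproduct_compose[OF vector_space_H] linear_map_intros)+

lemma tsum_coproduct_B1_antipode_B2:
  fixes sV :: "'f \<Rightarrow> 'v::ab_group_add \<Rightarrow> 'v"
  assumes vs: "vector_space sV" and G: "bilinear_map sc sV G"
  shows "tsum (\<Delta> (B1 u * S (B2 v))) G
       = tsum (\<Delta> u) (\<lambda>a b. tsum (\<Delta> v) (\<lambda>c d. G (B1 a * S (B2 c)) (B1 b * S (B2 d))))"
proof -
  note L = linear_map_compose[OF bilinear_map_left[OF G]] linear_map_compose[OF bilinear_map_right[OF G]]
    linear_map_intros linear_map_tsum_fun[OF vs] linear_map_tsum_coproduct_compose[OF vs]
  have "tsum (\<Delta> (B1 u * S (B2 v))) G
      = tsum (\<Delta> (B1 u)) (\<lambda>p q. tsum (\<Delta> (S (B2 v))) (\<lambda>p' q'. G (p * p') (q * q')))"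
    by (rule tsum_coproduct_mult[OF vs G])
  also have "\<dots> = tsum (\<Delta> u) (\<lambda>a b. tsum (\<Delta> (S (B2 v))) (\<lambda>p' q'. G (B1 a * p') (B1 b * q')))"
    by (rule tsum_coproduct_coalg_hom[OF vs _ coalg_hom_B1]) (intro L)+
  also have "\<dots> = tsum (\<Delta> u) (\<lambda>a b. tsum (\<Delta> v) (\<lambda>c d. G (B1 a * S (B2 c)) (B1 b * S (B2 d))))"
  proof (rule tsum_cong)
    fix a b
    have "bilinear_map sc sV (\<lambda>p' q'. G (B1 a * p') (B1 b * q'))"
      and "bilinear_map sc sV (\<lambda>p' q'. G (B1 a * S p') (B1 b * S q'))" by (intro L)+
    then show "tsum (\<Delta> (S (B2 v))) (\<lambda>p' q'. G (B1 a * p') (B1 b * q'))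
             = tsum (\<Delta> v) (\<lambda>c d. G (B1 a * S (B2 c)) (B1 b * S (B2 d)))"
      by (simp add: tsum_coproduct_antipode[OF vs] tsum_coproduct_coalg_hom[OF vs _ coalg_hom_B2])
  qed
  finally show ?thesis .
qed

lemma tsum_coproduct_cocycle:
  fixes sV :: "'f \<Rightarrow> 'v::ab_group_add \<Rightarrow> 'v"
  assumes vs: "vector_space sV" and G: "bilinear_map sc sV G"
  shows "tsum (\<Delta> (\<sigma> a)) G = tsum (\<Delta> a) (\<lambda>u v. G (\<sigma> u) (\<sigma> v))"
proof -
  note L = linear_map_compose[OF bilinear_map_left[OF G]] linear_map_compose[OF bilinear_map_right[OF G]]
    linear_map_intros
  have "tsum (\<Delta> (\<sigma> a)) G = tsum (\<Delta> a) (\<lambda>u v. tsum (\<Delta> (B1 u * S (B2 v))) G)"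
    unfolding cocycle_def by (simp add: linear_map_tsum[OF linear_map_tsum_coproduct[OF vs G]])
  also have "\<dots> = tsum (\<Delta> a) (\<lambda>u v. tsum (\<Delta> u) (\<lambda>a b. tsum (\<Delta> v) (\<lambda>c d.
      G (B1 a * S (B2 c)) (B1 b * S (B2 d)))))"
    by (simp add: tsum_coproduct_B1_antipode_B2[OF vs G])
  also have "\<dots> = tsum (\<Delta> a) (\<lambda>u v. tsum (\<Delta> u) (\<lambda>a c. tsum (\<Delta> v) (\<lambda>b d.
      G (B1 a * S (B2 c)) (B1 b * S (B2 d)))))"
    by (rule tsum_cocomm_middle[OF vs]) (intro L)+
  also have "\<dots> = tsum (\<Delta> a) (\<lambda>u v. G (\<sigma> u) (\<sigma> v))"
  proof (rule tsum_cong)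
    fix u v
    have "tsum (\<Delta> u) (\<lambda>a c. tsum (\<Delta> v) (\<lambda>b d. G (B1 a * S (B2 c)) (B1 b * S (B2 d))))
        = tsum (\<Delta> u) (\<lambda>a c. G (B1 a * S (B2 c)) (\<sigma> v))"
      unfolding cocycle_def by (rule tsum_cong) (simp add: linear_map_tsum[OF bilinear_map_right[OF G]])
    also have "\<dots> = G (\<sigma> u) (\<sigma> v)"
      unfolding cocycle_def[of _ _ _ _ u] by (simp add: linear_map_tsum[OF bilinear_map_left[OF G]])
    finally show "tsum (\<Delta> u) (\<lambda>a c. tsum (\<Delta> v) (\<lambda>b d. G (B1 a * S (B2 c)) (B1 b * S (B2 d))))
                = G (\<sigma> u) (\<sigma> v)" .
  qed
  finally show ?thesis .
qed

lemma cocycle_idem: "\<sigma> (\<sigma> a) = \<sigma> a"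
proof -
  have G: "bilinear_map sc sc (\<lambda>u v. B1 u * S (B2 v))" by (intro linear_map_intros)+
  have "\<sigma> (\<sigma> a) = tsum (\<Delta> (\<sigma> a)) (\<lambda>u v. B1 u * S (B2 v))" by (rule cocycle_def)
  also have "\<dots> = tsum (\<Delta> a) (\<lambda>u v. B1 (\<sigma> u) * S (B2 (\<sigma> v)))"
    by (rule tsum_coproduct_cocycle[OF vector_space_H G])
  also have "\<dots> = \<sigma> a" by (simp only: B1_cocycle B2_cocycle) (simp add: cocycle_def)
  finally show ?thesis .
qed

lemma cocycle_H1: "y \<in> H1 \<Delta> S B1 B2 \<Longrightarrow> \<sigma> y = y"
  by (auto simp: H1_def cocycle_idem)

lemma subspace_H1: "module.subspace sc (H1 \<Delta> S B1 B2)"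
proof -
  interpret vector_space sc by (rule vector_space_H)
  show ?thesis
    unfolding H1_def
  proof (rule subspaceI)
    have "\<sigma> 0 = 0" by (rule linear_map_zero[OF linear_map_cocycle])
    then show "0 \<in> range \<sigma>" by (metis rangeI)
  next
    fix x y assume "x \<in> range \<sigma>" "y \<in> range \<sigma>"
    then obtain a b where "x = \<sigma> a" "y = \<sigma> b" by blast
    then have "x + y = \<sigma> (a + b)" by (simp add: linear_map_add[OF linear_map_cocycle])
    then show "x + y \<in> range \<sigma>" by simp
  next
    fix c x assume "x \<in> range \<sigma>"
    then obtain a where "x = \<sigma> a" by blast
    then have "sc c x = \<sigma> (sc c a)" by (simp add: linear_map_scale[OF linear_map_cocycle])
    then show "sc c x \<in> range \<sigma>" by simp
  qed
qed

lemma coproduct_H1: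
  assumes "a \<in> H1 \<Delta> S B1 B2"
  shows "\<exists>rep. set rep \<subseteq> H1 \<Delta> S B1 B2 \<times> H1 \<Delta> S B1 B2 \<and> teq2 sc rep (\<Delta> a)"
proof -
  from assms obtain a' where a: "a = \<sigma> a'" by (auto simp: H1_def)
  let ?rep = "map (\<lambda>(u, v). (\<sigma> u, \<sigma> v)) (\<Delta> a')"
  have "set ?rep \<subseteq> H1 \<Delta> S B1 B2 \<times> H1 \<Delta> S B1 B2" by (auto simp: H1_def)
  moreover have "teq2 sc ?rep (\<Delta> a)"
    unfolding teq2_def
  proof (intro allI impI)
    fix \<beta> assume "bilin_form sc \<beta>"
    then have "bilinear_map sc (*) \<beta>"
      by (simp add: bilin_form_def bilinear_map_def linear_iff_linear_map)
    from tsum_coproduct_cocycle[OF vector_space_field this, of a']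
    show "tsum ?rep \<beta> = tsum (\<Delta> a) \<beta>" by (simp add: a tsum_map split_def)
  qed
  ultimately show ?thesis by blast
qed

end

section \<open>Convolution of characters\<close>

locale hopf_conv = hopf sc \<Delta> \<epsilon> S
  for sc :: "'f::field \<Rightarrow> 'h::ring_1 \<Rightarrow> 'h" and \<Delta> \<epsilon> S +
  fixes scA :: "'f \<Rightarrow> 'a::comm_ring_1 \<Rightarrow> 'a"
  assumes comm_algebra: "comm_algebra scA"
begin

lemma vector_space_A: "vector_space scA"
  using comm_algebra by (simp add: comm_algebra_def)

lemma scaleA_mult_left: "scA c (x * y) = scA c x * y"
  using comm_algebra by (simp add: comm_algebra_def)

lemma scaleA_mult_right: "scA c (x * y) = x * scA c y"
  using scaleA_mult_left[of c y x] by (simp add: mult.commute)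

definition conv :: "('h \<Rightarrow> 'a) \<Rightarrow> ('h \<Rightarrow> 'a) \<Rightarrow> 'h \<Rightarrow> 'a" where
  "conv \<alpha> \<beta> x = tsum (\<Delta> x) (\<lambda>u v. \<alpha> u * \<beta> v)"

definition conv_unit :: "'h \<Rightarrow> 'a" where
  "conv_unit x = scA (\<epsilon> x) 1"

lemma linear_map_conv_unit: "linear_map sc scA conv_unit"
  unfolding conv_unit_def[abs_def] by (rule linear_map_counit_scale[OF vector_space_A])

lemma linear_map_multA_right: "linear_map s1 scA F \<Longrightarrow> linear_map s1 scA (\<lambda>x. F x * c)"
  by (simp add: linear_map_def scaleA_mult_left distrib_right)

lemma linear_map_multA_left: "linear_map s1 scA F \<Longrightarrow> linear_map s1 scA (\<lambda>x. c * F x)"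
  by (simp add: linear_map_def scaleA_mult_right[symmetric] distrib_left)

lemma bilinear_map_mult:
  "linear_map sc scA \<alpha> \<Longrightarrow> linear_map sc scA \<beta> \<Longrightarrow> bilinear_map sc scA (\<lambda>u v. \<alpha> u * \<beta> v)"
  by (intro bilinear_mapI linear_map_multA_right linear_map_multA_left)

lemma linear_map_conv: "linear_map sc scA \<alpha> \<Longrightarrow> linear_map sc scA \<beta> \<Longrightarrow> linear_map sc scA (conv \<alpha> \<beta>)"
  unfolding conv_def[abs_def] by (rule linear_map_tsum_coproduct[OF vector_space_A bilinear_map_mult])

lemma conv_teq2:
  assumes "teq2 sc rep (\<Delta> a)" "linear_map sc scA \<alpha>" "linear_map sc scA \<beta>"
  shows "tsum rep (\<lambda>u v. \<alpha> u * \<beta> v) = conv \<alpha> \<beta> a"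
  unfolding conv_def by (rule tsum_teq2[OF vector_space_A bilinear_map_mult[OF assms(2,3)] assms(1)])

lemma conv_assoc:
  assumes \<alpha>: "linear_map sc scA \<alpha>" and \<beta>: "linear_map sc scA \<beta>" and \<gamma>: "linear_map sc scA \<gamma>"
  shows "conv (conv \<alpha> \<beta>) \<gamma> x = conv \<alpha> (conv \<beta> \<gamma>) x"
proof -
  have "trilinear_map sc scA (\<lambda>p q v. \<alpha> p * \<beta> q * \<gamma> v)"
    by (intro trilinear_mapI linear_map_multA_right linear_map_multA_left \<alpha> \<beta> \<gamma>)
  have "conv (conv \<alpha> \<beta>) \<gamma> x = tsum (\<Delta> x) (\<lambda>u v. tsum (\<Delta> u) (\<lambda>p q. \<alpha> p * \<beta> q * \<gamma> v))"
    unfolding conv_def by (simp add: tsum_mult_right)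
  also have "\<dots> = tsum (\<Delta> x) (\<lambda>u v. tsum (\<Delta> v) (\<lambda>p q. \<alpha> u * \<beta> p * \<gamma> q))"
    by (rule tsum_coassoc[OF vector_space_A \<open>trilinear_map sc scA _\<close>])
  also have "\<dots> = conv \<alpha> (conv \<beta> \<gamma>) x"
    unfolding conv_def by (simp add: tsum_mult_left mult.assoc)
  finally show ?thesis .
qed

lemma conv_unit_left: "linear_map sc scA \<beta> \<Longrightarrow> conv conv_unit \<beta> x = \<beta> x"
  unfolding conv_def conv_unit_def using tsum_counit_left[of scA \<beta> x]
  by (simp add: scaleA_mult_left[symmetric])

lemma conv_unit_right: "linear_map sc scA \<alpha> \<Longrightarrow> conv \<alpha> conv_unit x = \<alpha> x"
  unfolding conv_def conv_unit_def using tsum_counit_right[of scA \<alpha> x]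
  by (simp add: scaleA_mult_right[symmetric])

lemma conv_coalg_hom:
  assumes "coalg_hom sc \<Delta> \<epsilon> B" and "linear_map sc scA \<alpha>" and "linear_map sc scA \<beta>"
  shows "conv \<alpha> \<beta> (B x) = conv (\<lambda>z. \<alpha> (B z)) (\<lambda>z. \<beta> (B z)) x"
  unfolding conv_def
  by (rule tsum_coproduct_coalg_hom[OF vector_space_A bilinear_map_mult[OF assms(2,3)] assms(1)])

lemma linear_map_CharH: "f \<in> CharH sc scA \<Longrightarrow> linear_map sc scA f"
  by (simp add: CharH_def linear_iff_linear_map)

lemma linear_map_CharH_comp:
  "f \<in> CharH sc scA \<Longrightarrow> linear_map s1 sc F \<Longrightarrow> linear_map s1 scA (\<lambda>x. f (F x))"
  by (rule linear_map_compose[OF linear_map_CharH])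

lemma CharH_mult: "f \<in> CharH sc scA \<Longrightarrow> f (x * y) = f x * f y"
  by (simp add: CharH_def)

lemma CharH_one: "f \<in> CharH sc scA \<Longrightarrow> f 1 = 1"
  by (simp add: CharH_def)

lemma conv_CharH:
  assumes f: "f \<in> CharH sc scA" and h: "h \<in> CharH sc scA"
  shows "conv f h \<in> CharH sc scA"
proof -
  have G: "bilinear_map sc scA (\<lambda>u v. f u * h v)"
    by (rule bilinear_map_mult[OF linear_map_CharH[OF f] linear_map_CharH[OF h]])
  have "conv f h (x * y) = conv f h x * conv f h y" for x y
  proof -
    have "conv f h x * conv f h y
        = tsum (\<Delta> x) (\<lambda>u v. tsum (\<Delta> y) (\<lambda>u' v'. (f u * h v) * (f u' * h v')))"
      unfolding conv_def tsum_mult_right by (rule tsum_cong) (rule tsum_mult_left)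
    moreover have "conv f h (x * y)
        = tsum (\<Delta> x) (\<lambda>u v. tsum (\<Delta> y) (\<lambda>u' v'. (f u * f u') * (h v * h v')))"
      unfolding conv_def by (simp add: tsum_coproduct_mult[OF vector_space_A G] CharH_mult[OF f] CharH_mult[OF h])
    ultimately show ?thesis by (simp add: mult_ac)
  qed
  moreover have "conv f h 1 = 1"
    unfolding conv_def by (simp add: tsum_coproduct_one[OF vector_space_A G] CharH_one[OF f] CharH_one[OF h])
  ultimately show ?thesis
    using linear_map_conv[OF linear_map_CharH[OF f] linear_map_CharH[OF h]] vector_space_H vector_space_A
    by (simp add: CharH_def linear_iff_linear_map)
qed

lemma conv_antipode_CharH:
  assumes f: "f \<in> CharH sc scA"
  shows "conv (\<lambda>z. f (S z)) f = conv_unit"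
proof
  fix x
  have "conv (\<lambda>z. f (S z)) f x = f (tsum (\<Delta> x) (\<lambda>u v. S u * v))"
    unfolding conv_def by (simp add: linear_map_tsum[OF linear_map_CharH[OF f]] CharH_mult[OF f])
  then show "conv (\<lambda>z. f (S z)) f x = conv_unit x"
    by (simp add: antipode_left conv_unit_def linear_map_scale[OF linear_map_CharH[OF f]] CharH_one[OF f])
qed

lemma conv_antipode_coalg_hom_CharH:
  assumes f: "f \<in> CharH sc scA" and B: "coalg_hom sc \<Delta> \<epsilon> B"
  shows "conv (\<lambda>z. f (S (B z))) (\<lambda>z. f (B z)) = conv_unit"
proof
  fix x
  have "conv (\<lambda>z. f (S (B z))) (\<lambda>z. f (B z)) x = conv (\<lambda>z. f (S z)) f (B x)"
    by (rule conv_coalg_hom[OF B linear_map_compose[OF linear_map_CharH[OF f] linear_map_antipode]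
          linear_map_CharH[OF f], symmetric])
  also have "\<dots> = conv_unit (B x)" by (simp add: conv_antipode_CharH[OF f])
  also have "\<dots> = conv_unit x" using B by (simp add: conv_unit_def coalg_hom_def)
  finally show "conv (\<lambda>z. f (S (B z))) (\<lambda>z. f (B z)) x = conv_unit x" .
qed

end

locale rb_conv = rb_system sc \<Delta> \<epsilon> S B1 B2 + hopf_conv sc \<Delta> \<epsilon> S scA
  for sc :: "'f::field \<Rightarrow> 'h::ring_1 \<Rightarrow> 'h" and \<Delta> \<epsilon> S B1 B2 and scA :: "'f \<Rightarrow> 'a::comm_ring_1 \<Rightarrow> 'a"
begin

lemma conv_antipode:
  assumes "f \<in> CharH sc scA" and "h \<in> CharH sc scA"
  shows "conv f h (S x) = conv (\<lambda>z. f (S z)) (\<lambda>z. h (S z)) x"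
  unfolding conv_def
  by (rule tsum_coproduct_antipode[OF vector_space_A
        bilinear_map_mult[OF linear_map_CharH[OF assms(1)] linear_map_CharH[OF assms(2)]]])

lemma CharH_cocycle:
  assumes "f \<in> CharH sc scA"
  shows "f (\<sigma> x) = conv (\<lambda>z. f (B1 z)) (\<lambda>z. f (S (B2 z))) x"
  unfolding conv_def cocycle_def
  by (simp add: linear_map_tsum[OF linear_map_CharH[OF assms]] CharH_mult[OF assms])

lemma conv_H1_iff_conv:
  assumes a: "a \<in> H1 \<Delta> S B1 B2" and \<alpha>: "linear_map sc scA \<alpha>" and \<beta>: "linear_map sc scA \<beta>"
    and \<alpha>': "\<forall>x\<in>H1 \<Delta> S B1 B2. \<alpha>' x = \<alpha> x" and \<beta>': "\<forall>x\<in>H1 \<Delta> S B1 B2. \<beta>' x = \<beta> x"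
  shows "conv_H1 sc \<Delta> S B1 B2 \<alpha>' \<beta>' a val \<longleftrightarrow> val = conv \<alpha> \<beta> a"
proof -
  have eq: "tsum rep (\<lambda>u v. \<alpha>' u * \<beta>' v) = conv \<alpha> \<beta> a"
    if "set rep \<subseteq> H1 \<Delta> S B1 B2 \<times> H1 \<Delta> S B1 B2" and "teq2 sc rep (\<Delta> a)" for rep
  proof -
    have "tsum rep (\<lambda>u v. \<alpha>' u * \<beta>' v) = tsum rep (\<lambda>u v. \<alpha> u * \<beta> v)"
      by (rule tsum_cong) (use that(1) \<alpha>' \<beta>' in auto)
    also have "\<dots> = conv \<alpha> \<beta> a" by (rule conv_teq2[OF that(2) \<alpha> \<beta>])
    finally show ?thesis .
  qed
  show ?thesis
  proof
    assume "conv_H1 sc \<Delta> S B1 B2 \<alpha>' \<beta>' a val"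
    then show "val = conv \<alpha> \<beta> a" unfolding conv_H1_def using eq by auto
  next
    assume val: "val = conv \<alpha> \<beta> a"
    obtain rep where "set rep \<subseteq> H1 \<Delta> S B1 B2 \<times> H1 \<Delta> S B1 B2" "teq2 sc rep (\<Delta> a)"
      using coproduct_H1[OF a] by blast
    with eq val show "conv_H1 sc \<Delta> S B1 B2 \<alpha>' \<beta>' a val" unfolding conv_H1_def by auto
  qed
qed

lemma conv_cong_H1:
  assumes "a \<in> H1 \<Delta> S B1 B2"
    and "linear_map sc scA \<alpha>" "linear_map sc scA \<beta>" "linear_map sc scA \<alpha>'" "linear_map sc scA \<beta>'"
    and "\<forall>x\<in>H1 \<Delta> S B1 B2. \<alpha> x = \<alpha>' x" "\<forall>x\<in>H1 \<Delta> S B1 B2. \<beta> x = \<beta>' x"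
  shows "conv \<alpha> \<beta> a = conv \<alpha>' \<beta>' a"
proof -
  have "conv_H1 sc \<Delta> S B1 B2 \<alpha> \<beta> a (conv \<alpha> \<beta> a)"
    using conv_H1_iff_conv[OF assms(1-3)] by simp
  then show ?thesis
    using conv_H1_iff_conv[OF assms(1,4,5,6,7)] by simp
qed

lemma conv_left_inverse_eq_on_H1:
  assumes \<kappa>: "linear_map sc scA \<kappa>" and g: "linear_map sc scA g" and k: "linear_map sc scA k"
    and left: "conv \<kappa> g = conv_unit"
    and right: "\<forall>y\<in>H1 \<Delta> S B1 B2. conv g k y = conv_unit y"
    and y: "y \<in> H1 \<Delta> S B1 B2"
  shows "k y = \<kappa> y"
proof -
  have "k y = conv (conv \<kappa> g) k y" by (simp add: left conv_unit_left[OF k])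
  also have "\<dots> = conv \<kappa> (conv g k) y" by (rule conv_assoc[OF \<kappa> g k])
  also have "\<dots> = conv \<kappa> conv_unit y"
    using right by (intro conv_cong_H1[OF y \<kappa> linear_map_conv[OF g k] \<kappa> linear_map_conv_unit]) auto
  also have "\<dots> = \<kappa> y" by (rule conv_unit_right[OF \<kappa>])
  finally show ?thesis .
qed

lemma CharH1_right_inverse_eq:
  assumes \<phi>: "\<phi> \<in> CharH sc scA" and g: "g \<in> CharH1 sc scA \<Delta> S B1 B2"
    and f: "\<forall>a\<in>H1 \<Delta> S B1 B2. f a = \<phi> (B2 a)"
    and inverse: "\<forall>a\<in>H1 \<Delta> S B1 B2. conv_H1 sc \<Delta> S B1 B2 f g a (scA (\<epsilon> a) 1)"
    and a: "a \<in> H1 \<Delta> S B1 B2"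
  shows "g a = \<phi> (S (B2 a))"
proof -
  \<comment> \<open>\<open>g\<close> lives on \<open>H1\<close> only; a linear extension lets us compute in the convolution algebra of \<open>H\<close>.\<close>
  obtain k where k: "linear_map sc scA k" "\<forall>x\<in>H1 \<Delta> S B1 B2. k x = g x"
    using linear_map_extend_from_subspace[OF vector_space_H vector_space_A subspace_H1, of g] g
    unfolding CharH1_def by blast
  have \<phi>B2: "linear_map sc scA (\<lambda>z. \<phi> (B2 z))"
    and \<phi>SB2: "linear_map sc scA (\<lambda>z. \<phi> (S (B2 z)))"
    by (intro linear_map_CharH_comp[OF \<phi>] linear_map_intros)+
  have "\<forall>y\<in>H1 \<Delta> S B1 B2. conv (\<lambda>z. \<phi> (B2 z)) k y = conv_unit y"
    using inverse conv_H1_iff_conv[OF _ \<phi>B2 k(1)] f k(2) by (simp add: conv_unit_def)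
  from conv_left_inverse_eq_on_H1[OF \<phi>SB2 \<phi>B2 k(1)
      conv_antipode_coalg_hom_CharH[OF \<phi> coalg_hom_B2] this a] k(2) a
  show ?thesis by simp
qed

lemma CharH_antipode_B2_H1:
  assumes h: "h \<in> CharH sc scA" and hB1: "\<forall>a\<in>H1 \<Delta> S B1 B2. h (B1 a) = conv_unit a"
    and y: "y \<in> H1 \<Delta> S B1 B2"
  shows "h (S (B2 y)) = h y"
proof -
  note L = linear_map_CharH_comp[OF h] linear_map_intros
  have "h y = h (\<sigma> y)" by (simp add: cocycle_H1[OF y])
  also have "\<dots> = conv (\<lambda>z. h (B1 z)) (\<lambda>z. h (S (B2 z))) y" by (rule CharH_cocycle[OF h])
  also have "\<dots> = conv conv_unit (\<lambda>z. h (S (B2 z))) y"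
    using hB1 by (intro conv_cong_H1[OF y] linear_map_conv_unit L) auto
  also have "\<dots> = h (S (B2 y))" by (intro conv_unit_left L)
  finally show ?thesis by simp
qed

lemma conv_B1_antipode_B2_H1:
  assumes f: "f \<in> CharH sc scA" and h: "h \<in> CharH sc scA"
    and hB1: "\<forall>a\<in>H1 \<Delta> S B1 B2. h (B1 a) = conv_unit a" and y: "y \<in> H1 \<Delta> S B1 B2"
  shows "conv (\<lambda>z. f (B1 z)) (\<lambda>z. conv f h (S (B2 z))) y = conv f h y"
proof -
  note L = linear_map_CharH_comp[OF f] linear_map_CharH_comp[OF h]
    linear_map_intros linear_map_conv linear_map_CharH[OF f] linear_map_CharH[OF h]
  have "(\<lambda>z. conv f h (S (B2 z))) = conv (\<lambda>z. f (S (B2 z))) (\<lambda>z. h (S (B2 z)))"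
  proof
    fix z
    have "conv f h (S (B2 z)) = conv (\<lambda>z. f (S z)) (\<lambda>z. h (S z)) (B2 z)"
      by (rule conv_antipode[OF f h])
    also have "\<dots> = conv (\<lambda>z. f (S (B2 z))) (\<lambda>z. h (S (B2 z))) z"
      by (rule conv_coalg_hom[OF coalg_hom_B2]) (intro L)+
    finally show "conv f h (S (B2 z)) = conv (\<lambda>z. f (S (B2 z))) (\<lambda>z. h (S (B2 z))) z" .
  qed
  then have "conv (\<lambda>z. f (B1 z)) (\<lambda>z. conv f h (S (B2 z))) y
      = conv (conv (\<lambda>z. f (B1 z)) (\<lambda>z. f (S (B2 z)))) (\<lambda>z. h (S (B2 z))) y"
    by (simp add: conv_assoc L)
  also have "\<dots> = conv (\<lambda>z. f (\<sigma> z)) (\<lambda>z. h (S (B2 z))) y"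
    by (simp add: CharH_cocycle[OF f])
  also have "\<dots> = conv f h y"
    using cocycle_H1 CharH_antipode_B2_H1[OF h hB1]
    by (intro conv_cong_H1[OF y] L linear_map_cocycle) auto
  finally show ?thesis .
qed

end

theorem mainTheorem15:
  fixes sc :: "'f::field_char_0 \<Rightarrow> 'h::ring_1 \<Rightarrow> 'h"
    and \<Delta> :: "'h \<Rightarrow> ('h \<times> 'h) list" and \<epsilon> :: "'h \<Rightarrow> 'f" and S B1 B2 :: "'h \<Rightarrow> 'h"
    and scA :: "'f \<Rightarrow> 'a::comm_ring_1 \<Rightarrow> 'a"
    and f1 f2 f2inv :: "'h \<Rightarrow> 'a"
  assumes "rota_baxter_system sc \<Delta> \<epsilon> S B1 B2"
    and "comm_algebra scA"
    and "(f1, f2) \<in> G_B sc scA \<Delta> \<epsilon> S B1 B2"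
    and "f2inv \<in> CharH1 sc scA \<Delta> S B1 B2"
    and "\<forall>a\<in>H1 \<Delta> S B1 B2. conv_H1 sc \<Delta> S B1 B2 f2 f2inv a (scA (\<epsilon> a) 1)
                           \<and> conv_H1 sc \<Delta> S B1 B2 f2inv f2 a (scA (\<epsilon> a) 1)"
  shows "\<exists>\<phi>\<in>CharH sc scA. \<forall>a\<in>H1 \<Delta> S B1 B2. conv_H1 sc \<Delta> S B1 B2 f1 f2inv a (\<phi> a)"
proof -
  interpret rb_conv sc \<Delta> \<epsilon> S B1 B2 scA
    using assms(1,2) unfolding rota_baxter_system_def by unfold_locales auto
  from assms(3) obtain f h where f: "f \<in> CharH sc scA" and f1: "\<forall>a\<in>H1 \<Delta> S B1 B2. f1 a = f (B1 a)"
    and h: "h \<in> kerB sc scA \<Delta> \<epsilon> S B1 B2 B1"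
    and f2: "\<forall>a\<in>H1 \<Delta> S B1 B2. conv_H1 sc \<Delta> S B1 B2 (\<lambda>x. f (B2 x)) (\<lambda>x. h (B2 x)) a (f2 a)"
    unfolding G_B_def by blast
  have hC: "h \<in> CharH sc scA" and hB1: "\<forall>a\<in>H1 \<Delta> S B1 B2. h (B1 a) = conv_unit a"
    using h by (auto simp: kerB_def conv_unit_def)
  define \<phi> where "\<phi> = conv f h"
  have \<phi>: "\<phi> \<in> CharH sc scA" unfolding \<phi>_def by (rule conv_CharH[OF f hC])
  have "\<forall>a\<in>H1 \<Delta> S B1 B2. f2 a = \<phi> (B2 a)"
    using f2 conv_H1_iff_conv[OF _ linear_map_CharH_comp[OF f linear_map_B2]
        linear_map_CharH_comp[OF hC linear_map_B2]]
    by (simp add: \<phi>_def conv_coalg_hom[OF coalg_hom_B2 linear_map_CharH[OF f] linear_map_CharH[OF hC]])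
  then have "\<forall>a\<in>H1 \<Delta> S B1 B2. f2inv a = \<phi> (S (B2 a))"
    using CharH1_right_inverse_eq[OF \<phi> assms(4)] assms(5) by blast
  moreover have "\<forall>a\<in>H1 \<Delta> S B1 B2. conv (\<lambda>x. f (B1 x)) (\<lambda>x. \<phi> (S (B2 x))) a = \<phi> a"
    using conv_B1_antipode_B2_H1[OF f hC hB1] by (simp add: \<phi>_def)
  ultimately have "\<forall>a\<in>H1 \<Delta> S B1 B2. conv_H1 sc \<Delta> S B1 B2 f1 f2inv a (\<phi> a)"
    using f1 conv_H1_iff_conv[OF _ linear_map_CharH_comp[OF f linear_map_B1]
        linear_map_CharH_comp[OF \<phi> linear_map_compose[OF linear_map_antipode linear_map_B2]]]
    by simp
  with \<phi> show ?thesis by blast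
qed

end
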